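(* Let $\mathcal{L}$ be a Lie algebra over $\mathbf{k}$, $k\in\mathbf{k}$ nonzero, and let $((\mathcal{U},q),i)$ be the enveloping$^{6\text{-th}}$ algebra of $\mathcal{L}$. Then there exists a unique invariant anti-homomorphism $S$ of $(\mathcal{U},q)$ such that $S(q)=1-q$ and $S(i(x))=-\frac1k i(x)-k\,q\,i(x)+\frac1k i(x)q$ for all $x\in\mathcal{L}$.
   Context: Invariant algebra: for an associative algebra $A$ with identity and idempotent $q$, $(A,q)=\{x\in A: qxq=qx\}$; $\mathrm{Lie}(A,q)$ is $(A,q)$ with bracket $[x,y]_{6,k}=xy-yx-xyq+yxq+kxqy-kyqx$; invariant homomorphisms are unital multiplicative linear maps preserving the distinguished idempotents. The enveloping$^{6\text{-th}}$ algebra $((\mathcal{U},q),i)$: $(\mathcal{U},q)$ an invariant algebra, $i:\mathcal{L}\to\mathrm{Lie}(\mathcal{U},q)$ a Lie homomorphism, such that every Lie homomorphism $f:\mathcal{L}\to\mathrm{Lie}(A,q_A)$ into an invariant algebra factors uniquely as $f=f'\circ i$ with $f'$ an invariant homomorphism; here $(\mathcal{U},q)=\mathcal{U}$. For an invariant algebra $(A,q)$, the opposite invariant algebra is $(\mathring A,1-q)$ where $\mathring A=A$ with product $x\circ y=yx$. An invariant anti-homomorphism of $(A,q)$ is an invariant homomorphism $(A,q)\to(\mathring A,1-q)$, i.e. a linear map $S$ with $S(xy)=S(y)S(x)$, $S(1)=1$, $S(q)=1-q$. *)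

theory Defs
  imports Complex_Main
begin

text \<open>A (unital associative) algebra over a field 'k is modelled on a
  whole type 'a carrying an abelian group structure (type class), a scalar
  multiplication sc making it a k-vector space, an explicit bilinear associative
  multiplication m and a unit e. Multiplication is explicit so that the opposite
  algebra (same type, swapped product) is again such a structure.\<close>

definition k_algebra ::
  "('k::field \<Rightarrow> 'a::ab_group_add \<Rightarrow> 'a) \<Rightarrow> ('a \<Rightarrow> 'a \<Rightarrow> 'a) \<Rightarrow> 'a \<Rightarrow> bool" where
  "k_algebra sc m e \<longleftrightarrow>
     Vector_Spaces.vector_space sc \<and>
     (\<forall>x y z. m (m x y) z = m x (m y z)) \<and>
     (\<forall>x. m e x = x \<and> m x e = x) \<and>
     (\<forall>x y z. m (x + y) z = m x z + m y z) \<and>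
     (\<forall>x y z. m x (y + z) = m x y + m x z) \<and>
     (\<forall>a x y. m (sc a x) y = sc a (m x y) \<and> m x (sc a y) = sc a (m x y))"

definition invariant_algebra ::
  "('k::field \<Rightarrow> 'a::ab_group_add \<Rightarrow> 'a) \<Rightarrow> ('a \<Rightarrow> 'a \<Rightarrow> 'a) \<Rightarrow> 'a \<Rightarrow> 'a \<Rightarrow> bool" where
  "invariant_algebra sc m e q \<longleftrightarrow> k_algebra sc m e \<and> m q q = q"

definition inv_part :: "('a \<Rightarrow> 'a \<Rightarrow> 'a) \<Rightarrow> 'a \<Rightarrow> 'a set" where
  "inv_part m q = {x. m (m q x) q = m q x}"

definition bracket6 ::
  "('k \<Rightarrow> 'a::ab_group_add \<Rightarrow> 'a) \<Rightarrow> ('a \<Rightarrow> 'a \<Rightarrow> 'a) \<Rightarrow> 'a \<Rightarrow> 'k \<Rightarrow> 'a \<Rightarrow> 'a \<Rightarrow> 'a" where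
  "bracket6 sc m q k x y =
     m x y - m y x - m (m x y) q + m (m y x) q + sc k (m (m x q) y) - sc k (m (m y q) x)"

definition lie_algebra ::
  "('k::field \<Rightarrow> 'l::ab_group_add \<Rightarrow> 'l) \<Rightarrow> ('l \<Rightarrow> 'l \<Rightarrow> 'l) \<Rightarrow> bool" where
  "lie_algebra sL br \<longleftrightarrow>
     Vector_Spaces.vector_space sL \<and>
     (\<forall>x y z. br (x + y) z = br x z + br y z) \<and>
     (\<forall>x y z. br x (y + z) = br x y + br x z) \<and>
     (\<forall>a x y. br (sL a x) y = sL a (br x y) \<and> br x (sL a y) = sL a (br x y)) \<and>
     (\<forall>x. br x x = 0) \<and>
     (\<forall>x y z. br x (br y z) + br y (br z x) + br z (br x y) = 0)"

definition lie_hom6 ::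
  "('k::field \<Rightarrow> 'l::ab_group_add \<Rightarrow> 'l) \<Rightarrow> ('l \<Rightarrow> 'l \<Rightarrow> 'l) \<Rightarrow> 'k \<Rightarrow>
   ('k \<Rightarrow> 'a::ab_group_add \<Rightarrow> 'a) \<Rightarrow> ('a \<Rightarrow> 'a \<Rightarrow> 'a) \<Rightarrow> 'a \<Rightarrow> ('l \<Rightarrow> 'a) \<Rightarrow> bool" where
  "lie_hom6 sL br k sc m q f \<longleftrightarrow>
     Vector_Spaces.linear sL sc f \<and>
     (\<forall>x. f x \<in> inv_part m q) \<and>
     (\<forall>x y. f (br x y) = bracket6 sc m q k (f x) (f y))"

definition inv_hom ::
  "('k::field \<Rightarrow> 'a::ab_group_add \<Rightarrow> 'a) \<Rightarrow> ('a \<Rightarrow> 'a \<Rightarrow> 'a) \<Rightarrow> 'a \<Rightarrow> 'a \<Rightarrow>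
   ('k \<Rightarrow> 'b::ab_group_add \<Rightarrow> 'b) \<Rightarrow> ('b \<Rightarrow> 'b \<Rightarrow> 'b) \<Rightarrow> 'b \<Rightarrow> 'b \<Rightarrow> ('a \<Rightarrow> 'b) \<Rightarrow> bool" where
  "inv_hom sc1 m1 e1 q1 sc2 m2 e2 q2 f \<longleftrightarrow>
     Vector_Spaces.linear sc1 sc2 f \<and>
     (\<forall>x y. f (m1 x y) = m2 (f x) (f y)) \<and>
     f e1 = e2 \<and> f q1 = q2"

definition enveloping6 ::
  "('k::field \<Rightarrow> 'l::ab_group_add \<Rightarrow> 'l) \<Rightarrow> ('l \<Rightarrow> 'l \<Rightarrow> 'l) \<Rightarrow> 'k \<Rightarrow>
   ('k \<Rightarrow> 'u::ab_group_add \<Rightarrow> 'u) \<Rightarrow> ('u \<Rightarrow> 'u \<Rightarrow> 'u) \<Rightarrow> 'u \<Rightarrow> 'u \<Rightarrow> ('l \<Rightarrow> 'u) \<Rightarrow> bool" where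
  "enveloping6 sL br k sc m e q i \<longleftrightarrow>
     invariant_algebra sc m e q \<and>
     lie_hom6 sL br k sc m q i \<and>
     (\<forall>mA eA qA f. invariant_algebra sc mA eA qA \<and> lie_hom6 sL br k sc mA qA f \<longrightarrow>
        (\<exists>!f'. inv_hom sc m e q sc mA eA qA f' \<and> f = f' \<circ> i))"

definition opp :: "('a \<Rightarrow> 'a \<Rightarrow> 'a) \<Rightarrow> 'a \<Rightarrow> 'a \<Rightarrow> 'a" where
  "opp m x y = m y x"

definition inv_antihom ::
  "('k::field \<Rightarrow> 'a::ab_group_add \<Rightarrow> 'a) \<Rightarrow> ('a \<Rightarrow> 'a \<Rightarrow> 'a) \<Rightarrow> 'a \<Rightarrow> 'a \<Rightarrow> ('a \<Rightarrow> 'a) \<Rightarrow> bool" where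
  "inv_antihom sc m e q S \<longleftrightarrow> inv_hom sc m e q sc (opp m) e (e - q) S"

end

theory Submission
  imports Defs
begin

(* Let (U,q) be an invariant algebra and p = 1 - q. An element x lies in
   (U,q) iff q x p = 0, i.e. x is "upper triangular" for the Peirce decomposition
   with respect to p and q. On such elements the corner maps
       x |-> p x p   and   x |-> q x q
   are multiplicative, and the prescribed map
       F(x) = -(1/k) x - k q x + (1/k) x q
   simplifies to the block-diagonal element F(x) = -(1/k) p x p - k q x q.
   Computing corners of the bracket [a,b]_{6,k} and the bracket of the opposite
   invariant algebra (U^op, p) on block-diagonal elements shows that F turns
   [.,.]_{6,k} of (U,q) into [.,.]_{6,k} of (U^op, p). Hence F o i is a Lie
   homomorphism into Lie(U^op, p), and the universal property of the enveloping
   algebra yields a unique invariant homomorphism S : (U,q) -> (U^op, p) extending it,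
   which is exactly the invariant anti-homomorphism asked for. *)

locale unital_algebra =
  fixes sc :: "'k::field \<Rightarrow> 'u::ab_group_add \<Rightarrow> 'u" and m :: "'u \<Rightarrow> 'u \<Rightarrow> 'u" and e :: 'u
  assumes k_alg: "k_algebra sc m e"
begin

lemma vector_space: "vector_space sc" using k_alg by (simp add: k_algebra_def)
sublocale sc: vector_space sc by (rule vector_space)

lemma m_assoc: "m (m x y) z = m x (m y z)" using k_alg by (simp add: k_algebra_def)
lemma m_unit: "m e x = x" "m x e = x" using k_alg by (simp_all add: k_algebra_def)
lemma m_addl: "m (x + y) z = m x z + m y z" using k_alg by (simp add: k_algebra_def)
lemma m_addr: "m x (y + z) = m x y + m x z" using k_alg by (simp add: k_algebra_def)
lemma m_scl: "m (sc a x) y = sc a (m x y)" using k_alg by (simp add: k_algebra_def)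
lemma m_scr: "m x (sc a y) = sc a (m x y)" using k_alg by (simp add: k_algebra_def)

lemma m_left_additive: "additive (\<lambda>x. m x y)" by (simp add: additive_def m_addl)
lemma m_right_additive: "additive (\<lambda>y. m x y)" by (simp add: additive_def m_addr)

lemma m_diffl: "m (x - y) z = m x z - m y z"
  using additive.diff[OF m_left_additive] .
lemma m_diffr: "m z (x - y) = m z x - m z y"
  using additive.diff[OF m_right_additive] .
lemma m_zero: "m 0 x = 0" "m x 0 = 0"
  using additive.zero[OF m_left_additive] additive.zero[OF m_right_additive] by auto
lemma m_negl: "m (- x) y = - m x y" using additive.minus[OF m_left_additive] .
lemma m_negr: "m y (- x) = - m y x" using additive.minus[OF m_right_additive] .

lemmas m_linear = m_zero m_addl m_addr m_diffl m_diffr m_negl m_negr m_scl m_scr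

end

locale peirce = unital_algebra +
  fixes q
  assumes q_idem: "m q q = q"
begin

definition p where "p = e - q"

lemma p_plus_q: "p + q = e" by (simp add: p_def)
lemma p_idem: "m p p = p" by (simp add: p_def m_diffl m_diffr m_unit q_idem)
lemma p_q: "m p q = 0" by (simp add: p_def m_diffl m_unit q_idem)
lemma q_p: "m q p = 0" by (simp add: p_def m_diffr m_unit q_idem)

(* p and q are orthogonal idempotents; stated in right-associated form for rewriting. *)
lemma idem_rules:
  "m p (m p x) = m p x" "m q (m q x) = m q x" "m p (m q x) = 0" "m q (m p x) = 0"
  by (simp_all add: m_assoc[symmetric] p_idem q_idem p_q q_p m_linear)

lemmas idems = p_idem q_idem p_q q_p idem_rules

lemma inv_part_iff: "x \<in> inv_part m q \<longleftrightarrow> m q (m x p) = 0"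
  by (auto simp add: inv_part_def p_def m_linear m_unit m_assoc)

lemma split_left: "x = m p x + m q x"
  using m_addl[of p q x] by (simp add: p_plus_q m_unit)
lemma split_right: "x = m x p + m x q"
  using m_addr[of x p q] by (simp add: p_plus_q m_unit)

definition pcorner where "pcorner x = m p (m x p)"
definition qcorner where "qcorner x = m q (m x q)"

lemma inv_part_qp:
  assumes "x \<in> inv_part m q" shows "m q (m x p) = 0" "m q (m x (m p y)) = 0"
  using assms by (simp_all add: inv_part_iff m_assoc[symmetric] m_zero)

lemma inv_part_right_q: "m x q \<in> inv_part m q"
  by (simp add: inv_part_iff m_assoc idems m_zero)

lemma inv_part_left_q: "x \<in> inv_part m q \<Longrightarrow> m q x \<in> inv_part m q"
  by (simp add: inv_part_iff m_assoc idems inv_part_qp m_zero)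

lemma inv_part_mult:
  assumes "a \<in> inv_part m q" "b \<in> inv_part m q" shows "m a b \<in> inv_part m q"
proof -
  have "m q (m (m a b) p) = m q (m a (m (p + q) (m b p)))"
    by (simp add: p_plus_q m_unit m_assoc)
  also have "\<dots> = 0"
    by (simp add: m_linear m_assoc idems inv_part_qp[OF assms(1)] inv_part_qp[OF assms(2)])
  finally show ?thesis by (simp add: inv_part_iff)
qed

lemma inv_part_subspace:
  assumes "x \<in> inv_part m q" "y \<in> inv_part m q"
  shows "x + y \<in> inv_part m q" "x - y \<in> inv_part m q" "sc c x \<in> inv_part m q"
  using assms by (simp_all add: inv_part_iff m_linear)

lemma bracket_inv_part:
  assumes "a \<in> inv_part m q" "b \<in> inv_part m q"
  shows "bracket6 sc m q k a b \<in> inv_part m q"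
  using assms unfolding bracket6_def
  by (intro inv_part_subspace inv_part_mult inv_part_right_q) auto

lemma corner_linear:
  "pcorner (x + y) = pcorner x + pcorner y" "pcorner (x - y) = pcorner x - pcorner y"
  "pcorner (sc c x) = sc c (pcorner x)" "pcorner (- x) = - pcorner x"
  "qcorner (x + y) = qcorner x + qcorner y" "qcorner (x - y) = qcorner x - qcorner y"
  "qcorner (sc c x) = sc c (qcorner x)" "qcorner (- x) = - qcorner x"
  by (simp_all add: pcorner_def qcorner_def m_linear)

(* On the triangular algebra (U,q) both corner maps are multiplicative:
   p a b p = p a p b p + p a q b p, and q b p = 0; similarly for q. *)
lemma pcorner_mult: "b \<in> inv_part m q \<Longrightarrow> pcorner (m a b) = m (pcorner a) (pcorner b)"
proof -
  assume b: "b \<in> inv_part m q"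
  have "pcorner (m a b) = m p (m a (m (p + q) (m b p)))"
    by (simp add: pcorner_def p_plus_q m_unit m_assoc)
  also have "\<dots> = m (pcorner a) (pcorner b)"
    by (simp add: pcorner_def m_linear m_assoc idems inv_part_qp[OF b])
  finally show ?thesis .
qed

lemma qcorner_mult: "a \<in> inv_part m q \<Longrightarrow> qcorner (m a b) = m (qcorner a) (qcorner b)"
proof -
  assume a: "a \<in> inv_part m q"
  have "qcorner (m a b) = m q (m a (m (p + q) (m b q)))"
    by (simp add: qcorner_def p_plus_q m_unit m_assoc)
  also have "\<dots> = m (qcorner a) (qcorner b)"
    by (simp add: qcorner_def m_linear m_assoc idems inv_part_qp[OF a])
  finally show ?thesis .
qed

lemma corner_q:
  "pcorner (m x q) = 0" "pcorner (m q x) = 0"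
  "qcorner (m x q) = qcorner x" "qcorner (m q x) = qcorner x"
  by (simp_all add: pcorner_def qcorner_def m_assoc idems m_zero)

lemma pcorner_bracket:
  assumes "a \<in> inv_part m q" "b \<in> inv_part m q"
  shows "pcorner (bracket6 sc m q k a b) = m (pcorner a) (pcorner b) - m (pcorner b) (pcorner a)"
  using assms
  by (simp add: bracket6_def corner_linear pcorner_mult m_assoc corner_q inv_part_right_q
      inv_part_left_q m_zero sc.scale_right_diff_distrib)

lemma qcorner_bracket:
  assumes "a \<in> inv_part m q" "b \<in> inv_part m q"
  shows "qcorner (bracket6 sc m q k a b) = sc k (m (qcorner a) (qcorner b) - m (qcorner b) (qcorner a))"
  using assms
  by (simp add: bracket6_def corner_linear qcorner_mult m_assoc corner_q inv_part_right_q
      inv_part_left_q m_zero sc.scale_right_diff_distrib)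

lemma opp_invariant_algebra: "invariant_algebra sc (opp m) e p"
  using k_alg unfolding invariant_algebra_def k_algebra_def opp_def
  by (simp add: p_idem)

lemma opp_bracket_diagonal:
  "bracket6 sc (opp m) p k (pcorner x1 + qcorner x2) (pcorner y1 + qcorner y2) =
     m (qcorner y2) (qcorner x2) - m (qcorner x2) (qcorner y2) +
     sc k (m (pcorner y1) (pcorner x1) - m (pcorner x1) (pcorner y1))"
  by (simp add: bracket6_def opp_def pcorner_def qcorner_def m_linear m_assoc idems
      sc.scale_right_diff_distrib)

definition antipode_gen where
  "antipode_gen k x = - sc (1 / k) x - sc k (m q x) + sc (1 / k) (m x q)"

lemma antipode_gen_corners:
  assumes "x \<in> inv_part m q"
  shows "antipode_gen k x = pcorner (sc (- 1 / k) x) + qcorner (sc (- k) x)"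
proof -
  have xp: "m x p = pcorner x"
    using split_left[of "m x p"] by (simp add: pcorner_def m_assoc inv_part_qp[OF assms])
  have qx: "m q x = qcorner x"
    using split_right[of "m q x"] by (simp add: qcorner_def m_assoc inv_part_qp[OF assms])
  have "m x p = x - m x q"
    using split_right[of x] by (simp add: eq_diff_eq)
  hence "sc (1 / k) (m x p) = sc (1 / k) x - sc (1 / k) (m x q)"
    by (simp add: sc.scale_right_diff_distrib)
  hence "antipode_gen k x = - sc (1 / k) (m x p) - sc k (m q x)"
    unfolding antipode_gen_def by (simp add: algebra_simps)
  thus ?thesis by (simp add: xp qx corner_linear)
qed

lemma antipode_gen_bracket:
  assumes k: "k \<noteq> 0" and a: "a \<in> inv_part m q" and b: "b \<in> inv_part m q"
  shows "antipode_gen k (bracket6 sc m q k a b) =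
         bracket6 sc (opp m) p k (antipode_gen k a) (antipode_gen k b)"
  using k
  unfolding antipode_gen_corners[OF a] antipode_gen_corners[OF b] opp_bracket_diagonal
  by (simp add: antipode_gen_corners bracket_inv_part a b corner_linear
      pcorner_bracket[OF a b] qcorner_bracket[OF a b] m_linear sc.scale_right_diff_distrib)

lemma antipode_gen_inv_part:
  assumes "x \<in> inv_part m q"
  shows "antipode_gen k x \<in> inv_part (opp m) p"
  unfolding inv_part_def opp_def antipode_gen_corners[OF assms]
  by (simp add: pcorner_def qcorner_def m_linear m_assoc idems)

lemma antipode_gen_linear: "Vector_Spaces.linear sc sc (antipode_gen k)"
  unfolding Vector_Spaces.linear_iff antipode_gen_def
  by (simp add: vector_space m_linear sc.scale_right_distrib sc.scale_left_commute algebra_simps)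

lemma antipode_gen_lie_hom:
  assumes k: "k \<noteq> 0" and i: "lie_hom6 sL br k sc m q i"
  shows "lie_hom6 sL br k sc (opp m) p (antipode_gen k \<circ> i)"
proof -
  have lin: "Vector_Spaces.linear sL sc i" and inv: "\<And>x. i x \<in> inv_part m q"
    and br: "\<And>x y. i (br x y) = bracket6 sc m q k (i x) (i y)"
    using i unfolding lie_hom6_def by auto
  show ?thesis
    unfolding lie_hom6_def
    using Vector_Spaces.linear_compose[OF lin antipode_gen_linear]
    by (simp add: antipode_gen_inv_part[OF inv] br antipode_gen_bracket[OF k inv inv])
qed

end

(* Uniqueness and existence come from the universal property applied to F o i;
   the defining conditions of S are exactly those of the factorisation. *)
theorem proposition7p1:
  fixes sL :: "'k::field \<Rightarrow> 'l::ab_group_add \<Rightarrow> 'l"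
    and br :: "'l \<Rightarrow> 'l \<Rightarrow> 'l"
    and k :: 'k
    and sc :: "'k \<Rightarrow> 'u::ab_group_add \<Rightarrow> 'u"
    and m :: "'u \<Rightarrow> 'u \<Rightarrow> 'u"
    and e q :: 'u
    and i :: "'l \<Rightarrow> 'u"
  assumes "lie_algebra sL br"
    and "k \<noteq> 0"
    and "enveloping6 sL br k sc m e q i"
  shows "\<exists>!S. inv_antihom sc m e q S \<and> S q = e - q \<and>
           (\<forall>x. S (i x) = - sc (1 / k) (i x) - sc k (m q (i x)) + sc (1 / k) (m (i x) q))"
proof -
  have alg: "invariant_algebra sc m e q" and i: "lie_hom6 sL br k sc m q i"
    and universal: "\<And>mA eA qA f. invariant_algebra sc mA eA qA \<Longrightarrow> lie_hom6 sL br k sc mA qA f \<Longrightarrow>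
        \<exists>!f'. inv_hom sc m e q sc mA eA qA f' \<and> f = f' \<circ> i"
    using assms(3) unfolding enveloping6_def by auto
  interpret peirce sc m e q
    using alg by unfold_locales (simp_all add: invariant_algebra_def)
  have "\<exists>!S. inv_hom sc m e q sc (opp m) e p S \<and> antipode_gen k \<circ> i = S \<circ> i"
    using universal[OF opp_invariant_algebra antipode_gen_lie_hom[OF assms(2) i]] .
  moreover have "(inv_antihom sc m e q S \<and> S q = e - q \<and>
           (\<forall>x. S (i x) = - sc (1 / k) (i x) - sc k (m q (i x)) + sc (1 / k) (m (i x) q)))
      \<longleftrightarrow> inv_hom sc m e q sc (opp m) e p S \<and> antipode_gen k \<circ> i = S \<circ> i" for S
    unfolding inv_antihom_def inv_hom_def antipode_gen_def p_def by (auto simp: fun_eq_iff)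
  ultimately show ?thesis by simp
qed

end
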